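(* Fix a monomial order on $S$. Let $M\subseteq F$ be the submodule generated by elements $g_1,\dots,g_t,f_1,\dots,f_s\in F$, and let $L=Sg_1+\cdots+Sg_t$. For $k=0,\dots,s$ let $L_k=L+Sf_1+\cdots+Sf_k$. Then, as $\mathbb{K}$-vector spaces, \[ M=L\oplus\bigoplus_{i=1}^s f_i\cdot N_{L_{i-1}:f_i}. \]
   Context: Standing notation. $S=\mathbb{K}[x_1,\dots,x_n]$ and $F=Se_1\oplus\cdots\oplus Se_m$ is a free $S$-module. For a submodule $L'\subseteq F$ and $f\in F$, $L':f=\{p\in S: pf\in L'\}$ is an ideal of $S$. For an ideal $I\subseteq S$ and the fixed monomial order on $S$, $N_I$ is the $\mathbb{K}$-span of the monomials of $S$ not in the initial ideal of $I$. Finally, $f\cdot N_I=\{fp:p\in N_I\}$. *)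

theory Defs
  imports "HOL-Library.Poly_Mapping" "HOL-Library.Function_Algebras"
begin

text \<open>Polynomials in S = K[x_v : v in type v] are finitely supported maps from exponent vectors to K;
  a monomial is identified with its exponent vector.
  The free module F = S^m is represented as functions 'i \<Rightarrow> S (componentwise).\<close>

type_synonym ('v, 'k) mpoly = "('v \<Rightarrow>\<^sub>0 nat) \<Rightarrow>\<^sub>0 'k"

definition monomial_order :: "(('v \<Rightarrow>\<^sub>0 nat) \<Rightarrow> ('v \<Rightarrow>\<^sub>0 nat) \<Rightarrow> bool) \<Rightarrow> bool" where
  "monomial_order ord \<longleftrightarrow>
     (\<forall>a. ord a a) \<and>
     (\<forall>a b. ord a b \<and> ord b a \<longrightarrow> a = b) \<and>
     (\<forall>a b c. ord a b \<and> ord b c \<longrightarrow> ord a c) \<and>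
     (\<forall>a b. ord a b \<or> ord b a) \<and>
     (\<forall>a b c. ord a b \<longrightarrow> ord (a + c) (b + c)) \<and>
     (\<forall>a. ord 0 a)"

definition lead_mon :: "(('v \<Rightarrow>\<^sub>0 nat) \<Rightarrow> ('v \<Rightarrow>\<^sub>0 nat) \<Rightarrow> bool) \<Rightarrow> ('v, 'k::zero) mpoly \<Rightarrow> ('v \<Rightarrow>\<^sub>0 nat)" where
  "lead_mon ord p = (THE a. a \<in> Poly_Mapping.keys p \<and> (\<forall>b\<in>Poly_Mapping.keys p. ord b a))"

definition ideal_gen :: "('v, 'k::comm_ring_1) mpoly set \<Rightarrow> ('v, 'k) mpoly set" where
  "ideal_gen X = {\<Sum>x\<in>A. c x * x | A c. finite A \<and> A \<subseteq> X}"

definition init_ideal :: "(('v \<Rightarrow>\<^sub>0 nat) \<Rightarrow> ('v \<Rightarrow>\<^sub>0 nat) \<Rightarrow> bool) \<Rightarrow> ('v, 'k::comm_ring_1) mpoly set \<Rightarrow> ('v, 'k) mpoly set" where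
  "init_ideal ord I = ideal_gen {Poly_Mapping.single (lead_mon ord p) 1 | p. p \<in> I \<and> p \<noteq> 0}"

text \<open>N_I: the K-span of the monomials not in in(I), i.e. the polynomials all of
  whose monomials lie outside in(I).\<close>
definition std_span :: "(('v \<Rightarrow>\<^sub>0 nat) \<Rightarrow> ('v \<Rightarrow>\<^sub>0 nat) \<Rightarrow> bool) \<Rightarrow> ('v, 'k::comm_ring_1) mpoly set \<Rightarrow> ('v, 'k) mpoly set" where
  "std_span ord I = {p. \<forall>a\<in>Poly_Mapping.keys p. Poly_Mapping.single a 1 \<notin> init_ideal ord I}"

definition smult_vec :: "('v, 'k::comm_ring_1) mpoly \<Rightarrow> ('i \<Rightarrow> ('v, 'k) mpoly) \<Rightarrow> ('i \<Rightarrow> ('v, 'k) mpoly)" where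
  "smult_vec p f = (\<lambda>j. p * f j)"

definition submod_gen :: "('i \<Rightarrow> ('v, 'k::comm_ring_1) mpoly) set \<Rightarrow> ('i \<Rightarrow> ('v, 'k) mpoly) set" where
  "submod_gen X = {\<Sum>x\<in>A. smult_vec (c x) x | A c. finite A \<and> A \<subseteq> X}"

definition colon :: "('i \<Rightarrow> ('v, 'k::comm_ring_1) mpoly) set \<Rightarrow> ('i \<Rightarrow> ('v, 'k) mpoly) \<Rightarrow> ('v, 'k) mpoly set" where
  "colon L' f = {p. smult_vec p f \<in> L'}"

definition vec_times_set :: "('i \<Rightarrow> ('v, 'k::comm_ring_1) mpoly) \<Rightarrow> ('v, 'k) mpoly set \<Rightarrow> ('i \<Rightarrow> ('v, 'k) mpoly) set" where
  "vec_times_set f N = {smult_vec p f | p. p \<in> N}"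

end

theory Submission
  imports Defs "HOL-Library.Ramsey"
begin

text \<open>An element of L_s is m' + c f_s with m' \<in> L_(s-1); reducing c modulo the
  colon ideal I = L_(s-1) : f_s to a normal form c - q \<in> N_I with q \<in> I moves q f_s into L_(s-1).
  The sum is direct because I \<inter> N_I = 0: the leading monomial of a nonzero element of I lies in in(I).
  Normal forms exist by the division algorithm, which terminates because a monomial order in
  finitely many variables is well-founded.\<close>

definition mon_less :: "(('v \<Rightarrow>\<^sub>0 nat) \<Rightarrow> ('v \<Rightarrow>\<^sub>0 nat) \<Rightarrow> bool) \<Rightarrow> (('v \<Rightarrow>\<^sub>0 nat) \<times> ('v \<Rightarrow>\<^sub>0 nat)) set"
  where "mon_less ord = {(a, b). ord a b \<and> a \<noteq> b}"

lemma monomial_orderD: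
  assumes "monomial_order ord"
  shows monomial_order_refl: "ord a a"
    and monomial_order_antisym: "ord a b \<Longrightarrow> ord b a \<Longrightarrow> a = b"
    and monomial_order_trans: "ord a b \<Longrightarrow> ord b c \<Longrightarrow> ord a c"
    and monomial_order_linear: "ord a b \<or> ord b a"
    and monomial_order_add_right: "ord a b \<Longrightarrow> ord (a + c) (b + c)"
    and monomial_order_zero_least: "ord 0 a"
  using assms unfolding monomial_order_def by blast+

lemma monomial_order_le_add:
  assumes "monomial_order ord"
  shows "ord a (c + a)"
  using monomial_order_add_right[OF assms monomial_order_zero_least[OF assms, of c], of a] by simp

lemma trans_mon_less:
  assumes "monomial_order ord"
  shows "trans (mon_less ord)"
  by (rule transI) (auto simp: mon_less_def dest: monomial_order_trans[OF assms] monomial_order_antisym[OF assms])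

text \<open>A strict descent in a monomial order makes some exponent grow, because a monomial lies
  above each of its divisors. So the order is covered by finitely many well-founded relations,
  and disjunctive well-foundedness (Ramsey's theorem) takes the place of Dickson's lemma.\<close>

lemma mon_less_imp_lookup_less:
  assumes "monomial_order ord" and "(a, b) \<in> mon_less ord"
  shows "\<exists>v. Poly_Mapping.lookup a v < Poly_Mapping.lookup b v"
proof (rule ccontr)
  assume "\<not> ?thesis"
  then have "a = (a - b) + b"
    by (intro poly_mapping_eqI) (simp add: lookup_add lookup_minus not_less)
  then have "ord b a"
    using monomial_order_le_add[OF assms(1), of b "a - b"] by simp
  with assms show False
    unfolding mon_less_def by (auto dest: monomial_order_antisym[OF assms(1)])
qed

lemma wf_mon_less:
  fixes ord :: "('v::finite \<Rightarrow>\<^sub>0 nat) \<Rightarrow> ('v \<Rightarrow>\<^sub>0 nat) \<Rightarrow> bool"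
  assumes "monomial_order ord"
  shows "wf (mon_less ord)"
proof (rule trans_disj_wf_implies_wf[OF trans_mon_less[OF assms]])
  obtain e :: "nat \<Rightarrow> 'v" where e: "bij_betw e {..<card (UNIV :: 'v set)} UNIV"
    using ex_bij_betw_nat_finite[of "UNIV :: 'v set"] by (auto simp: atLeast0LessThan)
  define T where "T i = inv_image less_than (\<lambda>a. Poly_Mapping.lookup a (e i))" for i
  have "mon_less ord \<subseteq> (\<Union>i<card (UNIV :: 'v set). T i)"
  proof (rule subrelI)
    fix a b assume "(a, b) \<in> mon_less ord"
    then obtain v where "Poly_Mapping.lookup a v < Poly_Mapping.lookup b v"
      using mon_less_imp_lookup_less[OF assms] by blast
    moreover obtain i where "i < card (UNIV :: 'v set)" "v = e i"
      using e by (metis bij_betw_iff_bijections lessThan_iff UNIV_I)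
    ultimately show "(a, b) \<in> (\<Union>i<card (UNIV :: 'v set). T i)"
      by (auto simp: T_def)
  qed
  then show "disj_wf (mon_less ord)"
    unfolding disj_wf by (intro exI[of _ T] exI[of _ "card (UNIV :: 'v set)"]) (simp add: T_def)
qed

lemma monomial_order_ex_greatest:
  assumes "monomial_order ord" "finite K" "K \<noteq> {}"
  shows "\<exists>a\<in>K. \<forall>b\<in>K. ord b a"
  using assms(2,3)
proof (induction K rule: finite_ne_induct)
  case (singleton x)
  then show ?case using monomial_order_refl[OF assms(1)] by auto
next
  case (insert x K)
  then obtain a where "a \<in> K" "\<forall>b\<in>K. ord b a" by blast
  then show ?case
    using monomial_order_linear[OF assms(1), of x a] monomial_order_refl[OF assms(1)]
      monomial_order_trans[OF assms(1)] by blast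
qed

lemma lead_mon_greatest:
  assumes "monomial_order ord" and "p \<noteq> 0"
  shows "lead_mon ord p \<in> Poly_Mapping.keys p" and "b \<in> Poly_Mapping.keys p \<Longrightarrow> ord b (lead_mon ord p)"
proof -
  obtain a where "a \<in> Poly_Mapping.keys p" "\<forall>b\<in>Poly_Mapping.keys p. ord b a"
    using monomial_order_ex_greatest[OF assms(1), of "Poly_Mapping.keys p"] assms(2) by auto
  then have "\<exists>!a. a \<in> Poly_Mapping.keys p \<and> (\<forall>b\<in>Poly_Mapping.keys p. ord b a)"
    using monomial_order_antisym[OF assms(1)] by blast
  then have "lead_mon ord p \<in> Poly_Mapping.keys p \<and> (\<forall>b\<in>Poly_Mapping.keys p. ord b (lead_mon ord p))"
    unfolding lead_mon_def by (rule theI')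
  then show "lead_mon ord p \<in> Poly_Mapping.keys p" and "b \<in> Poly_Mapping.keys p \<Longrightarrow> ord b (lead_mon ord p)"
    by blast+
qed

definition is_ideal :: "('v, 'k::comm_ring_1) mpoly set \<Rightarrow> bool" where
  "is_ideal I \<longleftrightarrow> 0 \<in> I \<and> (\<forall>p\<in>I. \<forall>q\<in>I. p + q \<in> I) \<and> (\<forall>p\<in>I. \<forall>q. q * p \<in> I)"

lemma std_span_inter_ideal:
  assumes "monomial_order ord" and "p \<in> I" and "p \<in> std_span ord I"
  shows "p = 0"
proof (rule ccontr)
  assume "p \<noteq> 0"
  then have "Poly_Mapping.single (lead_mon ord p) 1 \<in> init_ideal ord I"
    unfolding init_ideal_def ideal_gen_def
    by (intro CollectI exI[of _ "{Poly_Mapping.single (lead_mon ord p) 1}"] exI[of _ "\<lambda>_. 1"])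
      (use \<open>p \<in> I\<close> in auto)
  with lead_mon_greatest(1)[OF assms(1) \<open>p \<noteq> 0\<close>] \<open>p \<in> std_span ord I\<close> show False
    unfolding std_span_def by blast
qed

lemma lookup_single_mult_add:
  "Poly_Mapping.lookup (Poly_Mapping.single (d::'a::cancel_comm_monoid_add) c * q) (d + b) = (c::'k::comm_semiring_1) * Poly_Mapping.lookup q b"
proof -
  have "(if d = a then c else 0) * x = (if d = a then c * x else 0)" for a and x :: 'k
    by simp
  then show ?thesis
    unfolding lookup_mult lookup_single when_def Sum_any.delta' add_left_cancel by simp
qed

text \<open>The generators of in(I) are only the leading monomials of elements of I, but every
  monomial a of in(I) is a multiple d + lead_mon p of one of them, and then a is the
  leading monomial of x^d p \<in> I.\<close>

lemma init_ideal_is_lead_mon: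
  fixes I :: "('v, 'k::field) mpoly set"
  assumes ord: "monomial_order ord" and I: "is_ideal I"
    and a: "Poly_Mapping.single a 1 \<in> init_ideal ord I"
  shows "\<exists>h\<in>I. a \<in> Poly_Mapping.keys h \<and> (\<forall>b\<in>Poly_Mapping.keys h. ord b a)"
proof -
  obtain A c where A: "A \<subseteq> {Poly_Mapping.single (lead_mon ord p) 1 | p. p \<in> I \<and> p \<noteq> 0}"
    and sum: "Poly_Mapping.single a (1::'k) = (\<Sum>x\<in>A. c x * x)"
    using a unfolding init_ideal_def ideal_gen_def by blast
  have "(\<Sum>x\<in>A. Poly_Mapping.lookup (c x * x) a) = 1"
    by (simp flip: lookup_sum sum)
  then obtain x where "x \<in> A" and "a \<in> Poly_Mapping.keys (c x * x)"
    by (metis (mono_tags, lifting) in_keys_iff sum.neutral zero_neq_one)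
  then obtain p where p: "x = Poly_Mapping.single (lead_mon ord p) 1" "p \<in> I" "p \<noteq> 0"
    using A by blast
  with keys_mult[of "c x" x] \<open>a \<in> Poly_Mapping.keys (c x * x)\<close> obtain d where d: "a = d + lead_mon ord p"
    by auto
  define h where "h = Poly_Mapping.single d 1 * p"
  have "h \<in> I"
    using I p(2) unfolding is_ideal_def h_def by blast
  moreover have "a \<in> Poly_Mapping.keys h"
    using lead_mon_greatest(1)[OF ord p(3)] by (simp add: h_def d lookup_single_mult_add in_keys_iff)
  moreover have "ord b a" if "b \<in> Poly_Mapping.keys h" for b
  proof -
    obtain e where "b = d + e" "e \<in> Poly_Mapping.keys p"
      using \<open>b \<in> Poly_Mapping.keys h\<close> keys_mult[of "Poly_Mapping.single d 1" p] unfolding h_def by auto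
    then show "ord b a"
      using monomial_order_add_right[OF ord lead_mon_greatest(2)[OF ord p(3)], of e d]
      by (simp add: d add.commute)
  qed
  ultimately show ?thesis by blast
qed

definition keys_in_init :: "(('v \<Rightarrow>\<^sub>0 nat) \<Rightarrow> ('v \<Rightarrow>\<^sub>0 nat) \<Rightarrow> bool) \<Rightarrow> ('v, 'k::comm_ring_1) mpoly set
    \<Rightarrow> ('v, 'k) mpoly \<Rightarrow> ('v \<Rightarrow>\<^sub>0 nat) set" where
  "keys_in_init ord I p = {a \<in> Poly_Mapping.keys p. Poly_Mapping.single a 1 \<in> init_ideal ord I}"

lemma std_span_iff_keys_in_init_empty: "p \<in> std_span ord I \<longleftrightarrow> keys_in_init ord I p = {}"
  unfolding std_span_def keys_in_init_def by blast

lemma finite_keys_in_init [simp]: "finite (keys_in_init ord I p)"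
  unfolding keys_in_init_def by simp

text \<open>One step of the division algorithm: cancelling the largest monomial of p in in(I)
  replaces all monomials of p in in(I) by smaller ones.\<close>

lemma keys_in_init_reduce:
  fixes I :: "('v, 'k::field) mpoly set"
  assumes ord: "monomial_order ord" and I: "is_ideal I" and p: "keys_in_init ord I p \<noteq> {}"
  shows "\<exists>h\<in>I. (keys_in_init ord I (p - h), keys_in_init ord I p) \<in> max_ext (mon_less ord)"
proof -
  obtain b where b: "b \<in> keys_in_init ord I p" and b_max: "\<forall>b'\<in>keys_in_init ord I p. ord b' b"
    using monomial_order_ex_greatest[OF ord finite_keys_in_init p] by blast
  then obtain h where h: "h \<in> I" "b \<in> Poly_Mapping.keys h" "\<forall>b'\<in>Poly_Mapping.keys h. ord b' b"
    using init_ideal_is_lead_mon[OF ord I] unfolding keys_in_init_def by blast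
  define c where "c = Poly_Mapping.lookup p b / Poly_Mapping.lookup h b"
  define h' where "h' = Poly_Mapping.single 0 c * h"
  have "h' \<in> I"
    using I h(1) unfolding is_ideal_def h'_def by blast
  have lookup_diff: "Poly_Mapping.lookup (p - h') a = Poly_Mapping.lookup p a - c * Poly_Mapping.lookup h a" for a
    using lookup_single_mult_add[of 0 c h a] by (simp add: h'_def lookup_minus)
  have "(b', b) \<in> mon_less ord" if b': "b' \<in> keys_in_init ord I (p - h')" for b'
  proof -
    have "b' \<in> Poly_Mapping.keys p \<or> b' \<in> Poly_Mapping.keys h" and "b' \<noteq> b"
      using b' h(2) by (auto simp: keys_in_init_def in_keys_iff lookup_diff c_def)
    then show ?thesis
      using b' b_max h(3) by (auto simp: keys_in_init_def mon_less_def)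
  qed
  with b have "(keys_in_init ord I (p - h'), keys_in_init ord I p) \<in> max_ext (mon_less ord)"
    by (intro max_extI) auto
  with \<open>h' \<in> I\<close> show ?thesis by blast
qed

lemma ex_std_span_normal_form:
  fixes ord :: "('v::finite \<Rightarrow>\<^sub>0 nat) \<Rightarrow> ('v \<Rightarrow>\<^sub>0 nat) \<Rightarrow> bool" and I :: "('v, 'k::field) mpoly set"
  assumes ord: "monomial_order ord" and I: "is_ideal I"
  shows "\<exists>q\<in>I. p - q \<in> std_span ord I"
proof (induction p rule: wf_induct_rule[OF wf_inv_image[OF max_ext_wf[OF wf_mon_less[OF ord]]],
      of "keys_in_init ord I"])
  case (1 p)
  show ?case
  proof (cases "keys_in_init ord I p = {}")
    case True
    then show ?thesis
      using I by (intro bexI[of _ 0]) (simp_all add: std_span_iff_keys_in_init_empty is_ideal_def)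
  next
    case False
    then obtain h where "h \<in> I"
      and "(keys_in_init ord I (p - h), keys_in_init ord I p) \<in> max_ext (mon_less ord)"
      using keys_in_init_reduce[OF ord I] by blast
    with 1 obtain q where "q \<in> I" "p - h - q \<in> std_span ord I"
      by auto
    with \<open>h \<in> I\<close> I show ?thesis
      by (intro bexI[of _ "h + q"]) (simp_all add: diff_diff_eq is_ideal_def)
  qed
qed

lemma smult_vec_0_left [simp]: "smult_vec 0 x = 0"
  by (simp add: smult_vec_def fun_eq_iff)

lemma smult_vec_1_left [simp]: "smult_vec 1 x = x"
  by (simp add: smult_vec_def fun_eq_iff)

lemma smult_vec_add_left: "smult_vec (p + q) x = smult_vec p x + smult_vec q x"
  by (simp add: smult_vec_def fun_eq_iff algebra_simps)

lemma smult_vec_smult_vec [simp]: "smult_vec p (smult_vec q x) = smult_vec (p * q) x"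
  by (simp add: smult_vec_def fun_eq_iff algebra_simps)

lemma smult_vec_sum: "smult_vec p (\<Sum>x\<in>A. u x) = (\<Sum>x\<in>A. smult_vec p (u x))"
  by (induction A rule: infinite_finite_induct) (simp_all add: smult_vec_def fun_eq_iff algebra_simps)

lemma smult_vec_minus_left: "smult_vec (- p) x = - smult_vec p x"
  by (simp add: smult_vec_def fun_eq_iff)

lemma submod_gen_zero: "0 \<in> submod_gen X"
  unfolding submod_gen_def by (intro CollectI exI[of _ "{}"]) simp

lemma submod_gen_base: "x \<in> X \<Longrightarrow> x \<in> submod_gen X"
  unfolding submod_gen_def by (intro CollectI exI[of _ "{x}"] exI[of _ "\<lambda>_. 1"]) simp

lemma submod_gen_mono: "X \<subseteq> Y \<Longrightarrow> submod_gen X \<subseteq> submod_gen Y"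
  unfolding submod_gen_def by blast

lemma submod_gen_smult:
  assumes "m \<in> submod_gen X"
  shows "smult_vec p m \<in> submod_gen X"
proof -
  obtain A c where "finite A" "A \<subseteq> X" "m = (\<Sum>x\<in>A. smult_vec (c x) x)"
    using assms unfolding submod_gen_def by blast
  then show ?thesis
    unfolding submod_gen_def
    by (intro CollectI exI[of _ A] exI[of _ "\<lambda>x. p * c x"]) (simp add: smult_vec_sum)
qed

lemma submod_gen_add:
  assumes "m \<in> submod_gen X" "n \<in> submod_gen X"
  shows "m + n \<in> submod_gen X"
proof -
  obtain A c B d where A: "finite A" "A \<subseteq> X" "m = (\<Sum>x\<in>A. smult_vec (c x) x)"
    and B: "finite B" "B \<subseteq> X" "n = (\<Sum>x\<in>B. smult_vec (d x) x)"
    using assms unfolding submod_gen_def by blast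
  define c' where "c' x = (if x \<in> A then c x else 0)" for x
  define d' where "d' x = (if x \<in> B then d x else 0)" for x
  have "m = (\<Sum>x\<in>A \<union> B. smult_vec (c' x) x)"
    unfolding A(3) by (rule sum.mono_neutral_cong_left) (use A(1) B(1) in \<open>auto simp: c'_def\<close>)
  moreover have "n = (\<Sum>x\<in>A \<union> B. smult_vec (d' x) x)"
    unfolding B(3) by (rule sum.mono_neutral_cong_left) (use A(1) B(1) in \<open>auto simp: d'_def\<close>)
  ultimately have "m + n = (\<Sum>x\<in>A \<union> B. smult_vec (c' x + d' x) x)"
    by (simp add: smult_vec_add_left sum.distrib)
  then show ?thesis
    unfolding submod_gen_def by (intro CollectI exI[of _ "A \<union> B"] exI[of _ "\<lambda>x. c' x + d' x"]) (simp add: A B)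
qed

lemma submod_gen_uminus: "m \<in> submod_gen X \<Longrightarrow> - m \<in> submod_gen X"
  using submod_gen_smult[of m X "-1"] by (simp add: smult_vec_minus_left)

lemma submod_gen_sum: "(\<And>i. i \<in> A \<Longrightarrow> w i \<in> submod_gen X) \<Longrightarrow> (\<Sum>i\<in>A. w i) \<in> submod_gen X"
  by (induction A rule: infinite_finite_induct) (auto simp: submod_gen_zero submod_gen_add)

lemma vec_times_set_submod_gen:
  "w \<in> vec_times_set x N \<Longrightarrow> x \<in> submod_gen X \<Longrightarrow> w \<in> submod_gen X"
  unfolding vec_times_set_def by (auto intro: submod_gen_smult)

lemma submod_gen_insertE:
  assumes "m \<in> submod_gen (insert x X)"
  obtains m' c where "m' \<in> submod_gen X" "m = m' + smult_vec c x"
proof -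
  obtain A c where A: "finite A" "A \<subseteq> insert x X" "m = (\<Sum>y\<in>A. smult_vec (c y) y)"
    using assms unfolding submod_gen_def by blast
  have rest: "(\<Sum>y\<in>A - {x}. smult_vec (c y) y) \<in> submod_gen X"
    using A unfolding submod_gen_def by blast
  show ?thesis
  proof (cases "x \<in> A")
    case True
    then have "m = (\<Sum>y\<in>A - {x}. smult_vec (c y) y) + smult_vec (c x) x"
      unfolding A(3) using A(1) by (simp add: sum.remove add.commute)
    with rest that show ?thesis by blast
  next
    case False
    with rest A(3) that[of m 0] show ?thesis by simp
  qed
qed

lemma colon_submod_gen_is_ideal: "is_ideal (colon (submod_gen X) f)"
  unfolding is_ideal_def colon_def
  by (auto simp: submod_gen_zero smult_vec_add_left submod_gen_add
      simp flip: smult_vec_smult_vec intro: submod_gen_smult)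

text \<open>The paper's summand f_i \<cdot> N_(L_(i-1) : f_i), with generators indexed from 0, so that
  L_(i-1) becomes \<langle>X \<union> {f_j | j < i}\<rangle>.\<close>

definition colon_summand :: "(('v \<Rightarrow>\<^sub>0 nat) \<Rightarrow> ('v \<Rightarrow>\<^sub>0 nat) \<Rightarrow> bool)
    \<Rightarrow> ('i \<Rightarrow> ('v, 'k::comm_ring_1) mpoly) set \<Rightarrow> (nat \<Rightarrow> 'i \<Rightarrow> ('v, 'k) mpoly) \<Rightarrow> nat
    \<Rightarrow> ('i \<Rightarrow> ('v, 'k) mpoly) set" where
  "colon_summand ord X f i =
     vec_times_set (f i) (std_span ord (colon (submod_gen (X \<union> f ` {..<i})) (f i)))"

lemma generators_lessThan_Suc: "X \<union> f ` {..<Suc k} = insert (f k) (X \<union> f ` {..<k})"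
  by (auto simp: lessThan_Suc)

lemma colon_summand_in_submod_gen:
  "w \<in> colon_summand ord X f i \<Longrightarrow> i < k \<Longrightarrow> w \<in> submod_gen (X \<union> f ` {..<k})"
  unfolding colon_summand_def by (auto intro: vec_times_set_submod_gen submod_gen_base)

lemma submod_gen_decompose:
  fixes ord :: "('v::finite \<Rightarrow>\<^sub>0 nat) \<Rightarrow> ('v \<Rightarrow>\<^sub>0 nat) \<Rightarrow> bool"
    and f :: "nat \<Rightarrow> 'i \<Rightarrow> ('v, 'k::field) mpoly"
  assumes ord: "monomial_order ord" and "m \<in> submod_gen (X \<union> f ` {..<k})"
  shows "\<exists>l w. l \<in> submod_gen X \<and> (\<forall>i<k. w i \<in> colon_summand ord X f i) \<and> m = l + (\<Sum>i<k. w i)"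
  using assms(2)
proof (induction k arbitrary: m)
  case 0
  then show ?case by (intro exI[of _ m] exI[of _ "\<lambda>_. 0"]) simp
next
  case (Suc k)
  let ?L = "submod_gen (X \<union> f ` {..<k})"
  obtain m' c where m': "m' \<in> ?L" "m = m' + smult_vec c (f k)"
    using Suc.prems unfolding generators_lessThan_Suc by (rule submod_gen_insertE)
  obtain q where q: "q \<in> colon ?L (f k)" "c - q \<in> std_span ord (colon ?L (f k))"
    using ex_std_span_normal_form[OF ord colon_submod_gen_is_ideal] by blast
  have "m' + smult_vec q (f k) \<in> ?L"
    using q(1) m'(1) submod_gen_add unfolding colon_def by blast
  then obtain l w where l: "l \<in> submod_gen X" and w: "\<forall>i<k. w i \<in> colon_summand ord X f i"
    and lw: "m' + smult_vec q (f k) = l + (\<Sum>i<k. w i)"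
    using Suc.IH by blast
  define w' where "w' = w(k := smult_vec (c - q) (f k))"
  have "\<forall>i<Suc k. w' i \<in> colon_summand ord X f i"
    using w q(2) by (auto simp: w'_def colon_summand_def vec_times_set_def less_Suc_eq)
  moreover have "m = l + (\<Sum>i<Suc k. w' i)"
  proof -
    have "m = m' + smult_vec q (f k) + smult_vec (c - q) (f k)"
      using m'(2) by (simp add: add.assoc flip: smult_vec_add_left)
    also have "\<dots> = l + (\<Sum>i<k. w' i) + w' k"
      by (simp add: lw w'_def)
    finally show ?thesis by (simp add: add.assoc)
  qed
  ultimately show ?case using l by blast
qed

lemma submod_gen_eq_sum_colon_summands:
  fixes ord :: "('v::finite \<Rightarrow>\<^sub>0 nat) \<Rightarrow> ('v \<Rightarrow>\<^sub>0 nat) \<Rightarrow> bool"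
    and f :: "nat \<Rightarrow> 'i \<Rightarrow> ('v, 'k::field) mpoly"
  assumes "monomial_order ord"
  shows "submod_gen (X \<union> f ` {..<k}) =
    {l + (\<Sum>i<k. w i) | l w. l \<in> submod_gen X \<and> (\<forall>i<k. w i \<in> colon_summand ord X f i)}"
proof
  show "submod_gen (X \<union> f ` {..<k}) \<subseteq> {l + (\<Sum>i<k. w i) | l w. l \<in> submod_gen X \<and> (\<forall>i<k. w i \<in> colon_summand ord X f i)}"
    using submod_gen_decompose[OF assms] by blast
  have "l + (\<Sum>i<k. w i) \<in> submod_gen (X \<union> f ` {..<k})"
    if "l \<in> submod_gen X" "\<forall>i<k. w i \<in> colon_summand ord X f i" for l w
    using that submod_gen_mono[of X "X \<union> f ` {..<k}"]
    by (intro submod_gen_add submod_gen_sum) (auto intro: colon_summand_in_submod_gen)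
  then show "{l + (\<Sum>i<k. w i) | l w. l \<in> submod_gen X \<and> (\<forall>i<k. w i \<in> colon_summand ord X f i)} \<subseteq> submod_gen (X \<union> f ` {..<k})"
    by blast
qed

lemma colon_summands_independent:
  fixes ord :: "('v \<Rightarrow>\<^sub>0 nat) \<Rightarrow> ('v \<Rightarrow>\<^sub>0 nat) \<Rightarrow> bool"
    and f :: "nat \<Rightarrow> 'i \<Rightarrow> ('v, 'k::comm_ring_1) mpoly"
  assumes ord: "monomial_order ord"
    and "l \<in> submod_gen X" "\<forall>i<k. w i \<in> colon_summand ord X f i" "l + (\<Sum>i<k. w i) = 0"
  shows "l = 0 \<and> (\<forall>i<k. w i = 0)"
  using assms(2-)
proof (induction k)
  case 0
  then show ?case by simp
next
  case (Suc k)
  let ?L = "submod_gen (X \<union> f ` {..<k})"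
  obtain p where p: "p \<in> std_span ord (colon ?L (f k))" "w k = smult_vec p (f k)"
    using Suc.prems(2) unfolding colon_summand_def vec_times_set_def by auto
  have "w i \<in> ?L" if "i < k" for i
    using Suc.prems(2) that colon_summand_in_submod_gen[of "w i" ord X f i k] by simp
  then have rest: "l + (\<Sum>i<k. w i) \<in> ?L"
    using Suc.prems(1) submod_gen_mono[of X "X \<union> f ` {..<k}"]
    by (intro submod_gen_add submod_gen_sum) auto
  have "(l + (\<Sum>i<k. w i)) + w k = 0"
    using Suc.prems(3) by (simp only: sum.lessThan_Suc add.assoc)
  then have "w k = - (l + (\<Sum>i<k. w i))"
    by (simp only: neg_eq_iff_add_eq_0 eq_commute[of "w k"])
  with p(2) have "smult_vec p (f k) \<in> ?L"
    using submod_gen_uminus[OF rest] by (simp only:)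
  then have "p = 0"
    using std_span_inter_ideal[OF ord _ p(1)] unfolding colon_def by blast
  with p(2) have "w k = 0"
    by simp
  have "l + (\<Sum>i<k. w i) = 0"
    using \<open>(l + (\<Sum>i<k. w i)) + w k = 0\<close> \<open>w k = 0\<close> by (simp only: add_0_right)
  then have "l = 0 \<and> (\<forall>i<k. w i = 0)"
    using Suc.IH[OF Suc.prems(1)] Suc.prems(2) by (meson less_SucI)
  with \<open>w k = 0\<close> show ?case
    by (auto simp: less_Suc_eq)
qed

theorem lemma6p2:
  fixes ord :: "('v::finite \<Rightarrow>\<^sub>0 nat) \<Rightarrow> ('v \<Rightarrow>\<^sub>0 nat) \<Rightarrow> bool"
    and g f :: "nat \<Rightarrow> ('i::finite \<Rightarrow> ('v, 'k::field) mpoly)"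
    and t s :: nat
  assumes "monomial_order ord"
  defines "M \<equiv> submod_gen (g ` {..<t} \<union> f ` {..<s})"
      and "L \<equiv> submod_gen (g ` {..<t})"
      and "Lk \<equiv> (\<lambda>k. submod_gen (g ` {..<t} \<union> f ` {..<k}))"
  shows "M = {l + (\<Sum>i<s. w i) | l w. l \<in> L \<and>
                 (\<forall>i<s. w i \<in> vec_times_set (f i) (std_span ord (colon (Lk i) (f i))))}
       \<and> (\<forall>l w. l \<in> L \<and> (\<forall>i<s. w i \<in> vec_times_set (f i) (std_span ord (colon (Lk i) (f i))))
              \<and> l + (\<Sum>i<s. w i) = 0 \<longrightarrow> l = 0 \<and> (\<forall>i<s. w i = 0))"
proof -
  have summand: "vec_times_set (f i) (std_span ord (colon (Lk i) (f i))) = colon_summand ord (g ` {..<t}) f i"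
    for i unfolding Lk_def colon_summand_def ..
  show ?thesis
    unfolding summand M_def L_def
    using submod_gen_eq_sum_colon_summands[OF assms(1)] colon_summands_independent[OF assms(1)]
    by blast
qed

end
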